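(* For every $x\in\mathcal{X}$, $N\in\mathbb{N}^+$ and $\delta>0$, $$\tilde\rho_N(x)-\rho(x)\le\delta+2\sup_{x'\in\mathcal{X}}\mathbb{P}_{Q_{x',N}}\left[|W_{x',N}-1|\ge\frac{\delta}{2}\right].$$
   Context: Let $(\mathcal{X},\mathcal{B}(\mathcal{X}))$ be a measurable space, $\pi$ a probability distribution on it with density $\pi(x)$ with respect to a reference measure, and $q$ a Markov proposal kernel. For each $x\in\mathcal{X}$, $N\in\mathbb{N}^+$, $Q_{x,N}$ is a probability distribution on $[0,\infty)$ such that $W_{x,N}\sim Q_{x,N}$ satisfies $W_{x,N}>0$ a.s. and $\mathbb{E}[W_{x,N}]=1$. Define $\alpha(x,y)=\min\{1,\frac{\pi(dy)q(y,dx)}{\pi(dx)q(x,dy)}\}$, $\rho(x)=1-\int\alpha(x,y)q(x,dy)$, $\tilde\alpha_N(x,y)=\mathbb{E}[\min\{1,\frac{\pi(dy)q(y,dx)}{\pi(dx)q(x,dy)}\frac{W_{y,N}}{W_{x,N}}\}]$ with $W_{x,N}\sim Q_{x,N}$ and $W_{y,N}\sim Q_{y,N}$ independent, and $\tilde\rho_N(x)=1-\int\tilde\alpha_N(x,y)q(x,dy)$. *)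

theory Defs
  imports "HOL-Probability.Probability"
begin

definition pq_measure :: "'a measure \<Rightarrow> 'a measure \<Rightarrow> ('a \<Rightarrow> 'a measure) \<Rightarrow> ('a \<times> 'a) measure" where
  "pq_measure M \<pi> q = \<pi> \<bind> (\<lambda>x. distr (q x) (M \<Otimes>\<^sub>M M) (\<lambda>y. (x, y)))"

text \<open>The Metropolis-Hastings ratio pi(dy)q(y,dx) / (pi(dx)q(x,dy)), as a Radon-Nikodym
  derivative of the swapped joint measure with respect to the joint measure.\<close>
definition mh_ratio :: "'a measure \<Rightarrow> 'a measure \<Rightarrow> ('a \<Rightarrow> 'a measure) \<Rightarrow> 'a \<times> 'a \<Rightarrow> ennreal" where
  "mh_ratio M \<pi> q = RN_deriv (pq_measure M \<pi> q)
      (distr (pq_measure M \<pi> q) (M \<Otimes>\<^sub>M M) (\<lambda>(x, y). (y, x)))"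

definition mh_alpha :: "'a measure \<Rightarrow> 'a measure \<Rightarrow> ('a \<Rightarrow> 'a measure) \<Rightarrow> 'a \<Rightarrow> 'a \<Rightarrow> real" where
  "mh_alpha M \<pi> q x y = enn2real (min 1 (mh_ratio M \<pi> q (x, y)))"

definition mh_rho :: "'a measure \<Rightarrow> 'a measure \<Rightarrow> ('a \<Rightarrow> 'a measure) \<Rightarrow> 'a \<Rightarrow> real" where
  "mh_rho M \<pi> q x = 1 - (\<integral>y. mh_alpha M \<pi> q x y \<partial>(q x))"

definition pm_alpha :: "'a measure \<Rightarrow> 'a measure \<Rightarrow> ('a \<Rightarrow> 'a measure) \<Rightarrow> ('a \<Rightarrow> nat \<Rightarrow> real measure)
    \<Rightarrow> nat \<Rightarrow> 'a \<Rightarrow> 'a \<Rightarrow> real" where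
  "pm_alpha M \<pi> q Q N x y =
     (\<integral>wx. (\<integral>wy. enn2real (min 1 (mh_ratio M \<pi> q (x, y) * ennreal (wy / wx))) \<partial>(Q y N)) \<partial>(Q x N))"

definition pm_rho :: "'a measure \<Rightarrow> 'a measure \<Rightarrow> ('a \<Rightarrow> 'a measure) \<Rightarrow> ('a \<Rightarrow> nat \<Rightarrow> real measure)
    \<Rightarrow> nat \<Rightarrow> 'a \<Rightarrow> real" where
  "pm_rho M \<pi> q Q N x = 1 - (\<integral>y. pm_alpha M \<pi> q Q N x y \<partial>(q x))"

end

theory Submission
  imports Defs
begin

text \<open>Fix x, y and the Metropolis-Hastings ratio r. If both weights lie within \<delta>/2 of 1, then
  W_y/W_x \<ge> 1 - \<delta>, hence min 1 (r W_y/W_x) \<ge> (1 - \<delta>) min 1 r \<ge> min 1 r - \<delta>; otherwise one of the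
  indicators of the bad events |W - 1| \<ge> \<delta>/2 absorbs the gap, since acceptance probabilities lie in
  [0,1]. Integrating over the independent weights shows that the exact acceptance probability
  exceeds the pseudo-marginal one by at most \<delta> plus the two bad-event probabilities, each
  bounded by the supremum; integrating over y ~ q x gives the bound on the rejection
  probabilities.\<close>

lemma enn2real_min_one_le_1 [simp]: "enn2real (min 1 c) \<le> 1"
  using enn2real_mono[of "min 1 c" 1] by simp

lemma enn2real_min_one_mult_ge:
  fixes c :: ennreal and t :: real
  assumes "0 \<le> t"
  shows "enn2real (min 1 c) * min 1 t \<le> enn2real (min 1 (c * ennreal t))"
proof (cases c)
  case (real r)
  have min_ennreal: "enn2real (min 1 (ennreal s)) = min 1 s" if "0 \<le> s" for s :: real
    using that by (cases "s \<le> 1") (auto simp: min_def)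
  have "min 1 r * min 1 t \<le> 1"
    using real assms by (intro mult_le_one) auto
  moreover have "min 1 r * min 1 t \<le> r * t"
    using real assms by (intro mult_mono) auto
  ultimately have "min 1 r * min 1 t \<le> min 1 (r * t)"
    by simp
  then show ?thesis
    using real assms by (simp add: min_ennreal ennreal_mult'[symmetric])
next
  case top
  then show ?thesis
    using assms by (cases "t = 0") (auto simp: ennreal_top_mult)
qed

lemma enn2real_min_one_mult_ratio_ge:
  fixes c :: ennreal and a b \<delta> :: real
  defines "B \<equiv> {w. \<delta> / 2 \<le> \<bar>w - 1\<bar>}"
  assumes "0 < \<delta>"
  shows "enn2real (min 1 c) - \<delta> - indicator B a - indicator B b
           \<le> enn2real (min 1 (c * ennreal (b / a)))"
proof -
  define m where "m = enn2real (min 1 c)"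
  have m_le_1: "m \<le> 1"
    unfolding m_def by simp
  have ge_0: "0 \<le> enn2real (min 1 (c * ennreal (b / a)))"
    by simp
  consider "a \<in> B \<or> b \<in> B \<or> 1 \<le> \<delta>" | "\<bar>a - 1\<bar> < \<delta> / 2" "\<bar>b - 1\<bar> < \<delta> / 2" "\<delta> < 1"
    unfolding B_def by force
  then show ?thesis
  proof cases
    case 1
    then have "m - \<delta> - indicator B a - indicator B b \<le> 0"
      using m_le_1 assms(2) by (auto simp: indicator_def)
    then show ?thesis
      using ge_0 m_def by linarith
  next
    case 2
    have "(1 - \<delta>) * a \<le> (1 - \<delta>) * (1 + \<delta> / 2)"
      using 2 abs_ge_self[of "a - 1"] by (intro mult_left_mono) linarith+
    also have "\<dots> \<le> 1 - \<delta> / 2"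
      using assms(2) by (simp add: algebra_simps)
    also have "\<dots> \<le> b"
      using 2 abs_ge_minus_self[of "b - 1"] by linarith
    finally have "(1 - \<delta>) * a \<le> b" .
    moreover have "0 < a"
      using 2 abs_ge_minus_self[of "a - 1"] by linarith
    ultimately have "1 - \<delta> \<le> b / a"
      by (simp add: pos_le_divide_eq)
    have "m - \<delta> \<le> m * (1 - \<delta>)"
      using m_le_1 assms(2) by (simp add: algebra_simps)
    also have "\<dots> \<le> m * min 1 (b / a)"
      using \<open>1 - \<delta> \<le> b / a\<close> assms(2) by (intro mult_left_mono) (auto simp: m_def)
    also have "\<dots> \<le> enn2real (min 1 (c * ennreal (b / a)))"
      unfolding m_def using \<open>1 - \<delta> \<le> b / a\<close> 2(3) by (intro enn2real_min_one_mult_ge) auto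
    finally show ?thesis
      using 2 by (simp add: B_def m_def)
  qed
qed

lemma (in prob_space) integral_unit_interval:
  fixes f :: "'a \<Rightarrow> real"
  assumes "\<And>x. 0 \<le> f x" "\<And>x. f x \<le> 1"
  shows "0 \<le> expectation f \<and> expectation f \<le> 1"
proof (cases "integrable M f")
  case True
  then show ?thesis
    using assms by (auto intro: integral_nonneg integral_le_const)
qed (simp add: not_integrable_integral_eq)

lemma (in prob_space) integral_ge_const_minus_prob:
  fixes f :: "'a \<Rightarrow> real"
  assumes f: "integrable M f" and B: "B \<in> events"
    and ge: "\<And>x. x \<in> space M \<Longrightarrow> c - indicator B x \<le> f x"
  shows "c - prob B \<le> expectation f"
proof -
  have B_finite: "emeasure M B < \<infinity>"
    by (simp add: emeasure_eq_measure)
  have "integrable M (\<lambda>x. c - indicator B x)"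
    using B B_finite by (intro Bochner_Integration.integrable_diff integrable_real_indicator) auto
  then have "(\<integral>x. c - indicator B x \<partial>M) \<le> expectation f"
    using f ge by (intro integral_mono)
  moreover have "(\<integral>x. c - indicator B x \<partial>M) = c - prob B"
    using B B_finite
    by (subst Bochner_Integration.integral_diff) (auto simp: prob_space)
  ultimately show ?thesis
    by simp
qed

lemma integral_measurable_subprob_algebra2:
  fixes f :: "_ \<Rightarrow> _ \<Rightarrow> real"
  assumes f[measurable]: "(\<lambda>(x, y). f x y) \<in> borel_measurable (M \<Otimes>\<^sub>M N)"
    and L[measurable]: "L \<in> M \<rightarrow>\<^sub>M subprob_algebra N"
  shows "(\<lambda>x. integral\<^sup>L (L x) (f x)) \<in> borel_measurable M"
proof -
  note integral_measurable_subprob_algebra[measurable]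
  note measurable_distr2[measurable]
  have "(\<lambda>x. integral\<^sup>L (distr (L x) (M \<Otimes>\<^sub>M N) (\<lambda>y. (x, y))) (\<lambda>(x, y). f x y)) \<in> borel_measurable M"
    by measurable
  then show ?thesis
  proof (rule measurable_cong[THEN iffD1, rotated])
    fix x assume x: "x \<in> space M"
    have "integral\<^sup>L (distr (L x) (M \<Otimes>\<^sub>M N) (\<lambda>y. (x, y))) (\<lambda>(x, y). f x y)
        = integral\<^sup>L (L x) (\<lambda>y. (\<lambda>(x, y). f x y) (x, y))"
    proof (rule integral_distr)
      show "Pair x \<in> L x \<rightarrow>\<^sub>M M \<Otimes>\<^sub>M N"
        by (subst measurable_cong_sets[OF sets_kernel[OF L x] refl]) (simp add: x)
    qed (rule f)
    then show "integral\<^sup>L (distr (L x) (M \<Otimes>\<^sub>M N) (\<lambda>y. (x, y))) (\<lambda>(x, y). f x y)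
        = integral\<^sup>L (L x) (f x)"
      by simp
  qed
qed

lemma measure_kernel_le_SUP:
  assumes "K \<in> M \<rightarrow>\<^sub>M prob_algebra N" "x \<in> space M"
  shows "measure (K x) A \<le> (SUP x'\<in>space M. measure (K x') A)"
proof (intro cSUP_upper[OF assms(2)] bdd_aboveI2)
  fix x' assume "x' \<in> space M"
  then show "measure (K x') A \<le> 1"
    using measurable_space[OF assms(1)] by (simp add: space_prob_algebra prob_space.prob_le_1)
qed

lemma integrable_bounded_kernel:
  fixes f :: "'b \<Rightarrow> real"
  assumes K: "K \<in> M \<rightarrow>\<^sub>M prob_algebra N" "x \<in> space M"
    and f: "f \<in> borel_measurable N" "\<And>y. y \<in> space N \<Longrightarrow> \<bar>f y\<bar> \<le> c"
  shows "integrable (K x) f"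
proof -
  interpret prob_space "K x"
    using measurable_space[OF K] by (simp add: space_prob_algebra)
  have sets_K: "sets (K x) = sets N"
    using measurable_space[OF K] by (simp add: space_prob_algebra)
  show ?thesis
  proof (rule integrable_const_bound[where B=c])
    show "f \<in> borel_measurable (K x)"
      using f(1) by (simp only: measurable_cong_sets[OF sets_K refl])
    show "AE y in K x. norm (f y) \<le> c"
      using f(2) sets_eq_imp_space_eq[OF sets_K] by (intro AE_I2) simp
  qed
qed

lemma measurable_mh_ratio:
  assumes "space \<pi> \<noteq> {}"
  shows "mh_ratio M \<pi> q \<in> borel_measurable (M \<Otimes>\<^sub>M M)"
proof -
  have "sets (pq_measure M \<pi> q) = sets (M \<Otimes>\<^sub>M M)"
    unfolding pq_measure_def using assms by (intro sets_bind) simp_all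
  then show ?thesis
    unfolding mh_ratio_def using borel_measurable_RN_deriv measurable_cong_sets by blast
qed

definition noisy_acceptance :: "ennreal \<Rightarrow> real measure \<Rightarrow> real measure \<Rightarrow> real" where
  "noisy_acceptance r P R = (\<integral>a. \<integral>b. enn2real (min 1 (r * ennreal (b / a))) \<partial>R \<partial>P)"

lemma pm_alpha_eq_noisy_acceptance:
  "pm_alpha M \<pi> q Q N x y = noisy_acceptance (mh_ratio M \<pi> q (x, y)) (Q x N) (Q y N)"
  unfolding pm_alpha_def noisy_acceptance_def ..

lemma noisy_acceptance_unit_interval:
  assumes "prob_space P" "prob_space R"
  shows "0 \<le> noisy_acceptance r P R \<and> noisy_acceptance r P R \<le> 1"
proof -
  have "0 \<le> (\<integral>b. enn2real (min 1 (r * ennreal (b / a))) \<partial>R)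
      \<and> (\<integral>b. enn2real (min 1 (r * ennreal (b / a))) \<partial>R) \<le> 1" for a
    by (intro prob_space.integral_unit_interval[OF assms(2)]) simp_all
  then show ?thesis
    unfolding noisy_acceptance_def by (intro prob_space.integral_unit_interval[OF assms(1)]) auto
qed

lemma measurable_noisy_acceptance:
  assumes r[measurable]: "r \<in> borel_measurable M"
    and L: "L \<in> M \<rightarrow>\<^sub>M subprob_algebra borel"
    and P: "P \<in> space (subprob_algebra borel)"
  shows "(\<lambda>y. noisy_acceptance (r y) P (L y)) \<in> borel_measurable M"
proof -
  have "(\<lambda>z. \<integral>b. enn2real (min 1 (r (fst z) * ennreal (b / snd z))) \<partial>L (fst z))
      \<in> borel_measurable (M \<Otimes>\<^sub>M borel)"
    by (rule integral_measurable_subprob_algebra2[OF _ measurable_compose[OF measurable_fst L]])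
      measurable
  then show ?thesis
    unfolding noisy_acceptance_def
    using integral_measurable_subprob_algebra2[OF _ measurable_const[OF P],
        of "\<lambda>y a. \<integral>b. enn2real (min 1 (r y * ennreal (b / a))) \<partial>L y"]
    by (simp add: split_beta')
qed

lemma noisy_acceptance_ge:
  fixes \<delta> :: real
  defines "B \<equiv> {w. \<delta> / 2 \<le> \<bar>w - 1\<bar>}"
  assumes P: "prob_space P" "sets P = sets borel"
    and R: "prob_space R" "sets R = sets borel"
    and \<delta>: "0 < \<delta>"
  shows "enn2real (min 1 r) - \<delta> - measure P B - measure R B \<le> noisy_acceptance r P R"
proof -
  interpret P: prob_space P by fact
  interpret R: prob_space R by fact
  define F where "F a b = enn2real (min 1 (r * ennreal (b / a)))" for a b :: real
  have F_bounds: "0 \<le> F a b" "F a b \<le> 1" for a b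
    unfolding F_def by simp_all
  have F_measurable: "(\<lambda>(a, b). F a b) \<in> borel_measurable (borel \<Otimes>\<^sub>M borel)"
    unfolding F_def by measurable
  have B_borel: "B \<in> sets borel"
    unfolding B_def by measurable
  have F_integrable: "integrable R (F a)" for a
  proof (rule R.integrable_const_bound[where B=1])
    show "F a \<in> borel_measurable R"
      using F_measurable unfolding measurable_cong_sets[OF R(2) refl] by measurable
  qed (simp add: F_bounds)
  have inner: "enn2real (min 1 r) - \<delta> - indicator B a - measure R B \<le> (\<integral>b. F a b \<partial>R)" for a
    using enn2real_min_one_mult_ratio_ge[OF \<delta>, of r a] B_borel R(2)
    by (intro R.integral_ge_const_minus_prob F_integrable) (auto simp: F_def B_def)
  have G_integrable: "integrable P (\<lambda>a. \<integral>b. F a b \<partial>R)"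
  proof (rule P.integrable_const_bound[where B=1])
    have "(\<lambda>(a, b). F a b) \<in> borel_measurable (P \<Otimes>\<^sub>M R)"
      by (subst measurable_cong_sets[OF sets_pair_measure_cong[OF P(2) R(2)] refl])
        (rule F_measurable)
    then show "(\<lambda>a. \<integral>b. F a b \<partial>R) \<in> borel_measurable P"
      by (rule R.borel_measurable_lebesgue_integral)
    show "AE a in P. norm (\<integral>b. F a b \<partial>R) \<le> 1"
      using R.integral_unit_interval[OF F_bounds] by simp
  qed
  have "enn2real (min 1 r) - \<delta> - measure R B - measure P B \<le> (\<integral>a. \<integral>b. F a b \<partial>R \<partial>P)"
    using inner B_borel P(2) by (intro P.integral_ge_const_minus_prob G_integrable) (auto simp: algebra_simps)
  then show ?thesis
    unfolding noisy_acceptance_def F_def by simp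
qed

lemma integrable_mh_alpha:
  assumes "space \<pi> \<noteq> {}" "q \<in> M \<rightarrow>\<^sub>M prob_algebra M" "x \<in> space M"
  shows "integrable (q x) (mh_alpha M \<pi> q x)"
proof (rule integrable_bounded_kernel[OF assms(2,3), where c=1])
  show "mh_alpha M \<pi> q x \<in> borel_measurable M"
    using measurable_mh_ratio[OF assms(1)] assms(3) unfolding mh_alpha_def by measurable
qed (simp add: mh_alpha_def)

lemma integrable_pm_alpha:
  assumes "space \<pi> \<noteq> {}" "q \<in> M \<rightarrow>\<^sub>M prob_algebra M" "x \<in> space M"
    and Q: "(\<lambda>x'. Q x' N) \<in> M \<rightarrow>\<^sub>M prob_algebra borel"
  shows "integrable (q x) (pm_alpha M \<pi> q Q N x)"
proof (rule integrable_bounded_kernel[OF assms(2,3), where c=1])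
  have "(\<lambda>y. mh_ratio M \<pi> q (x, y)) \<in> borel_measurable M"
    using measurable_mh_ratio[OF assms(1)] assms(3) by measurable
  then show "pm_alpha M \<pi> q Q N x \<in> borel_measurable M"
    unfolding pm_alpha_eq_noisy_acceptance
    using measurable_prob_algebraD[OF Q] measurable_space[OF measurable_prob_algebraD[OF Q] assms(3)]
    by (rule measurable_noisy_acceptance)
  show "\<bar>pm_alpha M \<pi> q Q N x y\<bar> \<le> 1" if "y \<in> space M" for y
    using measurable_space[OF Q assms(3)] measurable_space[OF Q that]
      noisy_acceptance_unit_interval[of "Q x N" "Q y N"]
    by (simp add: pm_alpha_eq_noisy_acceptance space_prob_algebra)
qed

theorem lemma3p4:
  fixes M \<mu> \<pi> :: "'a measure" and p :: "'a \<Rightarrow> ennreal"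
    and q :: "'a \<Rightarrow> 'a measure" and Q :: "'a \<Rightarrow> nat \<Rightarrow> real measure"
    and x :: 'a and N :: nat and \<delta> :: real
  assumes sets_mu: "sets \<mu> = sets M"
    and p_meas: "p \<in> borel_measurable M"
    and pi_density: "\<pi> = density \<mu> p"
    and pi_prob: "prob_space \<pi>"
    and q_kernel: "q \<in> M \<rightarrow>\<^sub>M prob_algebra M"
    and Q_kernel: "\<And>n. n \<ge> 1 \<Longrightarrow> (\<lambda>x'. Q x' n) \<in> M \<rightarrow>\<^sub>M prob_algebra borel"
    and Q_pos: "\<And>x' n. x' \<in> space M \<Longrightarrow> n \<ge> 1 \<Longrightarrow> AE w in Q x' n. w > 0"
    and Q_integrable: "\<And>x' n. x' \<in> space M \<Longrightarrow> n \<ge> 1 \<Longrightarrow> integrable (Q x' n) (\<lambda>w. w)"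
    and Q_mean: "\<And>x' n. x' \<in> space M \<Longrightarrow> n \<ge> 1 \<Longrightarrow> (\<integral>w. w \<partial>(Q x' n)) = 1"
    and x_in: "x \<in> space M"
    and N_pos: "N \<ge> 1"
    and delta_pos: "\<delta> > 0"
  shows "pm_rho M \<pi> q Q N x - mh_rho M \<pi> q x
           \<le> \<delta> + 2 * (SUP x'\<in>space M. measure (Q x' N) {w. \<bar>w - 1\<bar> \<ge> \<delta> / 2})"
proof -
  define B where "B = {w::real. \<delta> / 2 \<le> \<bar>w - 1\<bar>}"
  define S where "S = (SUP x'\<in>space M. measure (Q x' N) B)"
  have Q_kernel_N: "(\<lambda>x'. Q x' N) \<in> M \<rightarrow>\<^sub>M prob_algebra borel"
    using Q_kernel N_pos .
  have Q_prob: "prob_space (Q x' N)" "sets (Q x' N) = sets borel" if "x' \<in> space M" for x'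
    using measurable_space[OF Q_kernel_N that] by (simp_all add: space_prob_algebra)
  have alpha_gap: "mh_alpha M \<pi> q x y - pm_alpha M \<pi> q Q N x y \<le> \<delta> + 2 * S"
    if "y \<in> space M" for y
    using noisy_acceptance_ge[OF Q_prob[OF x_in] Q_prob[OF that] delta_pos, of "mh_ratio M \<pi> q (x, y)"]
      measure_kernel_le_SUP[OF Q_kernel_N x_in, of B] measure_kernel_le_SUP[OF Q_kernel_N that, of B]
    unfolding mh_alpha_def pm_alpha_eq_noisy_acceptance B_def S_def by linarith
  note pi_nonempty = prob_space.not_empty[OF pi_prob]
  note mh_integrable = integrable_mh_alpha[OF pi_nonempty q_kernel x_in]
  note pm_integrable = integrable_pm_alpha[where Q=Q and N=N, OF pi_nonempty q_kernel x_in Q_kernel_N]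
  have q_prob: "prob_space (q x)" "space (q x) = space M"
    using measurable_space[OF q_kernel x_in] sets_eq_imp_space_eq[of "q x" M]
    by (simp_all add: space_prob_algebra)
  have "pm_rho M \<pi> q Q N x - mh_rho M \<pi> q x
      = (\<integral>y. mh_alpha M \<pi> q x y - pm_alpha M \<pi> q Q N x y \<partial>q x)"
    unfolding pm_rho_def mh_rho_def using mh_integrable pm_integrable by simp
  also have "\<dots> \<le> \<delta> + 2 * S"
    using alpha_gap q_prob mh_integrable pm_integrable
    by (intro prob_space.integral_le_const) auto
  finally show ?thesis
    unfolding S_def B_def .
qed

end
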